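(* Let $\{x^k\}$ be generated by Algorithm IRG with the backtracking stepsize rule and $\theta<\mu$, and assume $\rho_k\to0$. Assume $\{x^k\}$ has an accumulation point $\bar x$, $f$ satisfies the KL property at $\bar x$ with $\psi(t)=Mt^q$ for some $M>0$ and $q\in(0,1)$, and $\nabla f$ is Lipschitz continuous on a neighborhood of $\bar x$. Assume $\mathbb N\setminus\mathcal N$ is infinite, enumerate it increasingly as $j_1<j_2<\cdots$, and set $z^k:=x^{j_k}$. Then: (i) if $q\in(0,1/2]$, $\{z^k\}$ converges linearly to $\bar x$, i.e. there exist $C>0$ and $\lambda\in(0,1)$ with $\|z^k-\bar x\|\le C\lambda^k$ for all large $k$; (ii) if $q\in(1/2,1)$, there exists $\varrho>0$ with $\|z^k-\bar x\|\le\varrho k^{-\frac{1-q}{2q-1}}$ for all sufficiently large $k$.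
   Context: Algorithm IRG (general inexact reduced gradient framework). Let $f:\mathbb R^n\to\mathbb R$ be continuously differentiable. Parameters: initial point $x^1\in\mathbb R^n$, initial radii $\varepsilon_1>0$, $r_1>0$, reduction factors $\mu,\theta\in(0,1)$, and a sequence $\{\rho_k\}$ of positive numbers. For $k=1,2,\dots$: (1) choose $g^k\in\mathbb R^n$ with $\|g^k-\nabla f(x^k)\|\le\min\{\varepsilon_k,\rho_k\}$; (2) if $\|g^k\|\le r_k+\varepsilon_k$, set $r_{k+1}=\mu r_k$, $\varepsilon_{k+1}=\theta\varepsilon_k$, $d^k=0$; otherwise set $r_{k+1}=r_k$, $\varepsilon_{k+1}=\varepsilon_k$ and $d^k=-\frac{\|g^k\|-\varepsilon_k}{\|g^k\|}g^k$; (3) choose a stepsize $t_k>0$ by some rule; (4) set $x^{k+1}=x^k+t_kd^k$. The set of null iterations is $\mathcal N:=\{k\in\mathbb N: x^{k+1}=x^k\}$. Backtracking stepsize rule: fix $\beta,\gamma,\tau\in(0,1)$; if $d^k=0$ set $t_k=\tau$; otherwise $t_k=\max\{t\in\{1,\gamma,\gamma^2,\dots\}: f(x^k+td^k)\le f(x^k)-\beta t\|d^k\|^2\}$. KL property with $\psi(t)=Mt^q$: there exist $\eta>0$ and a neighborhood $U$ of $\bar x$ such that $\|\nabla f(x)\|\ge M(f(x)-f(\bar x))^q$ for all $x\in U$ with $f(\bar x)<f(x)<f(\bar x)+\eta$. *)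

theory Defs
  imports "HOL-Analysis.Analysis"
begin

definition C1_grad :: "('a::euclidean_space \<Rightarrow> real) \<Rightarrow> ('a \<Rightarrow> 'a) \<Rightarrow> bool" where
  "C1_grad f grad \<longleftrightarrow>
     (\<forall>x. (f has_derivative (\<lambda>h. grad x \<bullet> h)) (at x)) \<and> continuous_on UNIV grad"

definition armijo :: "('a::euclidean_space \<Rightarrow> real) \<Rightarrow> real \<Rightarrow> 'a \<Rightarrow> 'a \<Rightarrow> real \<Rightarrow> bool" where
  "armijo f beta xk dk t \<longleftrightarrow> f (xk + t *\<^sub>R dk) \<le> f xk - beta * t * (norm dk)^2"

text \<open>Sequences (x, g, eps, r, d, t), indexed from k = 1, generated by Algorithm IRG with
  the backtracking stepsize rule.\<close>
definition IRG_backtracking ::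
  "('a::euclidean_space \<Rightarrow> real) \<Rightarrow> ('a \<Rightarrow> 'a) \<Rightarrow> 'a \<Rightarrow> real \<Rightarrow> real \<Rightarrow> real \<Rightarrow> real
   \<Rightarrow> (nat \<Rightarrow> real) \<Rightarrow> real \<Rightarrow> real \<Rightarrow> real
   \<Rightarrow> (nat \<Rightarrow> 'a) \<Rightarrow> (nat \<Rightarrow> 'a) \<Rightarrow> (nat \<Rightarrow> real) \<Rightarrow> (nat \<Rightarrow> real) \<Rightarrow> (nat \<Rightarrow> 'a) \<Rightarrow> (nat \<Rightarrow> real)
   \<Rightarrow> bool" where
  "IRG_backtracking f grad x1 eps1 r1 mu theta rho beta gamma tau x g eps r d t \<longleftrightarrow>
     x 1 = x1 \<and> eps 1 = eps1 \<and> r 1 = r1 \<and>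
     (\<forall>k\<ge>1.
        norm (g k - grad (x k)) \<le> min (eps k) (rho k) \<and>
        (if norm (g k) \<le> r k + eps k
         then r (k+1) = mu * r k \<and> eps (k+1) = theta * eps k \<and> d k = 0
         else r (k+1) = r k \<and> eps (k+1) = eps k \<and>
              d k = - ((norm (g k) - eps k) / norm (g k)) *\<^sub>R g k) \<and>
        (if d k = 0 then t k = tau
         else (\<exists>i::nat. t k = gamma ^ i \<and> armijo f beta (x k) (d k) (gamma ^ i) \<and>
                  (\<forall>j<i. \<not> armijo f beta (x k) (d k) (gamma ^ j)))) \<and>
        x (k+1) = x k + t k *\<^sub>R d k)"

text \<open>KL property at xbar with desingularizing function psi(t) = M t^q (form from the paper).\<close>
definition KL_power :: "('a::euclidean_space \<Rightarrow> real) \<Rightarrow> ('a \<Rightarrow> 'a) \<Rightarrow> 'a \<Rightarrow> real \<Rightarrow> real \<Rightarrow> bool" where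
  "KL_power f grad xbar M q \<longleftrightarrow>
     (\<exists>eta>0. \<exists>U. open U \<and> xbar \<in> U \<and>
        (\<forall>y\<in>U. f xbar < f y \<and> f y < f xbar + eta \<longrightarrow>
            norm (grad y) \<ge> M * (f y - f xbar) powr q))"

end

theory Submission
  imports Defs
begin

text \<open>At a non-null iteration the direction satisfies \<open>grad f(x^k) . d^k <= -|d^k|^2\<close> and
  \<open>|grad f(x^k)| <= C |d^k|\<close>, the latter because \<open>theta < mu\<close> keeps the error radius
  \<open>eps_k\<close> proportional to \<open>r_k\<close>. The Armijo decrease, the KL inequality and the concavity
  of \<open>s \<mapsto> s^(1-q)\<close> then bound each step length by the drop of the potential
  \<open>(f(x^k) - f(xbar))^(1-q)\<close>. Hence, once an iterate is close to \<open>xbar\<close>, the remaining path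
  is short: the iterates stay in the KL neighbourhood and
  \<open>|x^k - xbar| <= K (f(x^k) - f(xbar))^(1-q)\<close>.

  Near \<open>xbar\<close> the Lipschitz gradient keeps the backtracked stepsizes away from \<open>0\<close>, so
  along the non-null iterations \<open>z^k\<close> the gaps \<open>e_k = f(z^k) - f(xbar)\<close> satisfy
  \<open>e_(k+1) <= e_k - c e_k^(2q)\<close>. This recursion forces geometric decay for \<open>q <= 1/2\<close> and
  \<open>e_k = O(k^(-1/(2q-1)))\<close> for \<open>q > 1/2\<close>; raising to the power \<open>1 - q\<close> gives the rates.\<close>

section \<open>Elementary facts on real sequences\<close>

lemma powr_diff_ge_concave:
  fixes a b q :: real
  assumes "0 < b" "b \<le> a" "0 < q" "q < 1"
  shows "(1 - q) * (a - b) / a powr q \<le> a powr (1 - q) - b powr (1 - q)"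
proof -
  have a: "a > 0" using assms by simp
  have "b powr (1 - q) * a powr q \<le> (1 - q) * b + q * a"
    using Youngs_inequality_0[of "1 - q" q b a] assms a by simp
  moreover have "a powr (1 - q) * a powr q = a" using a by (simp add: powr_add[symmetric])
  ultimately have "(1 - q) * (a - b) \<le> (a powr (1 - q) - b powr (1 - q)) * a powr q"
    by (simp add: algebra_simps)
  then show ?thesis using a by (simp add: divide_le_eq)
qed

lemma powr_neg_ge_linear:
  fixes y p :: real
  assumes "0 < y" "y \<le> 1" "0 < p"
  shows "1 + p * (1 - y) \<le> y powr (- p)"
proof -
  have "p * (1 + ln y) \<le> p * y"
    using ln_le_minus_one[of y] assms by (intro mult_left_mono) auto
  then have "1 + p * (1 - y) \<le> 1 + (- p * ln y)" by (simp add: algebra_simps)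
  also have "\<dots> \<le> exp (- p * ln y)" by (rule exp_ge_add_one_self)
  also have "\<dots> = y powr (- p)" using assms by (simp add: powr_def)
  finally show ?thesis .
qed

lemma geometric_bound_of_ratio:
  fixes e :: "nat \<Rightarrow> real"
  assumes lam: "lam > 0" and ratio: "\<And>n. n \<ge> N \<Longrightarrow> e (Suc n) \<le> lam * e n" and "n \<ge> N"
  shows "e n \<le> e N / lam ^ N * lam ^ n"
  using \<open>n \<ge> N\<close>
proof (induction n rule: dec_induct)
  case base
  then show ?case using lam by simp
next
  case (step n)
  have "e (Suc n) \<le> lam * e n" using ratio step by simp
  also have "\<dots> \<le> lam * (e N / lam ^ N * lam ^ n)"
    by (rule mult_left_mono[OF step.IH]) (use lam in simp)
  finally show ?case by (simp add: algebra_simps)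
qed

text \<open>For \<open>q \<le> 1/2\<close> and small \<open>e\<close> the decrease \<open>c e^(2q)\<close> dominates
  \<open>c e\<close>, so the recursion contracts by the factor \<open>1 - c\<close>.\<close>
lemma decay_recursion_linear_rate:
  fixes e :: "nat \<Rightarrow> real"
  assumes pos: "\<And>n. e n > 0" and lim: "e \<longlonglongrightarrow> 0" and q: "0 < q" "q \<le> 1/2" and c: "c > 0"
    and rec: "\<forall>\<^sub>F n in sequentially. e (Suc n) \<le> e n - c * e n powr (2 * q)"
  shows "\<exists>A>0. \<exists>lam. 0 < lam \<and> lam < 1 \<and> (\<forall>\<^sub>F n in sequentially. e n \<le> A * lam ^ n)"
proof -
  have "\<forall>\<^sub>F n in sequentially. e (Suc n) \<le> (1 - c) * e n"
    using rec order_tendstoD(2)[OF lim zero_less_one]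
  proof eventually_elim
    case (elim n)
    have "e n powr 1 \<le> e n powr (2 * q)"
      using elim pos[of n] q by (intro powr_mono') auto
    then have "c * e n \<le> c * e n powr (2 * q)" using pos[of n] c by simp
    then show ?case using elim by (simp add: algebra_simps)
  qed
  then obtain N where ratio: "\<And>n. n \<ge> N \<Longrightarrow> e (Suc n) \<le> (1 - c) * e n"
    unfolding eventually_sequentially by blast
  have "0 < e (Suc N)" by (rule pos)
  also have "\<dots> \<le> (1 - c) * e N" by (rule ratio) simp
  finally have lam: "0 < 1 - c" using pos[of N] by (simp add: zero_less_mult_iff)
  have "\<forall>\<^sub>F n in sequentially. e n \<le> e N / (1 - c) ^ N * (1 - c) ^ n"
    using geometric_bound_of_ratio[where e = e and N = N, OF lam ratio]
    unfolding eventually_sequentially by blast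
  moreover have "e N / (1 - c) ^ N > 0" using pos lam by simp
  ultimately show ?thesis
    using lam c by (intro exI[of _ "e N / (1 - c) ^ N"] conjI exI[of _ "1 - c"]) auto
qed

lemma decay_recursion_powr_increment:
  fixes a b c p :: real
  assumes a: "a > 0" and b: "b > 0" and p: "p > 0" and c: "c > 0"
    and rec: "b \<le> a - c * a powr (1 + p)"
  shows "a powr (- p) + p * c \<le> b powr (- p)"
proof -
  define y where "y = 1 - c * a powr p"
  have b_le: "b \<le> a * y" using rec a unfolding y_def by (simp add: powr_add algebra_simps)
  have "0 < a * y" using b_le b by linarith
  then have y: "0 < y" "y \<le> 1" using a c unfolding y_def by (auto simp: zero_less_mult_iff)
  have "a powr (- p) + p * c = a powr (- p) * (1 + p * (1 - y))"
    using a unfolding y_def by (simp add: algebra_simps powr_add[symmetric])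
  also have "\<dots> \<le> a powr (- p) * y powr (- p)"
    using powr_neg_ge_linear[OF y p] by (intro mult_left_mono) auto
  also have "\<dots> = (a * y) powr (- p)" by (simp add: powr_mult)
  also have "\<dots> \<le> b powr (- p)" using b_le b p by (intro powr_mono2') auto
  finally show ?thesis .
qed

text \<open>For \<open>q > 1/2\<close> the quantity \<open>e^(1-2q)\<close> grows at least linearly.\<close>
lemma decay_recursion_sublinear_rate:
  fixes e :: "nat \<Rightarrow> real"
  assumes pos: "\<And>n. e n > 0" and q: "1/2 < q" and c: "c > 0"
    and rec: "\<forall>\<^sub>F n in sequentially. e (Suc n) \<le> e n - c * e n powr (2 * q)"
  shows "\<exists>v>0. \<forall>\<^sub>F n in sequentially. e n \<le> v * real n powr (- 1 / (2 * q - 1))"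
proof -
  define p where "p = 2 * q - 1"
  have p: "p > 0" using q unfolding p_def by simp
  obtain N where rec': "\<And>n. n \<ge> N \<Longrightarrow> e (Suc n) \<le> e n - c * e n powr (1 + p)"
    using rec unfolding eventually_sequentially p_def by auto
  have grow: "real (n - N) * (p * c) \<le> e n powr (- p)" if "n \<ge> N" for n
    using that
  proof (induction n rule: dec_induct)
    case base
    then show ?case by simp
  next
    case (step n)
    then show ?case
      using decay_recursion_powr_increment[OF pos pos p c rec'[of n]]
      by (simp add: Suc_diff_le algebra_simps)
  qed
  define D where "D = p * c / 2"
  have D: "D > 0" unfolding D_def using p c by simp
  have "e n \<le> D powr (- 1 / p) * real n powr (- 1 / p)" if n: "n \<ge> 2 * N + 1" for n
  proof -
    have "D * real n \<le> real (n - N) * (p * c)"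
      using n p c unfolding D_def by (simp add: of_nat_diff field_simps)
    also have "\<dots> \<le> e n powr (- p)" using grow n by simp
    finally have le: "D * real n \<le> e n powr (- p)" .
    have "e n = (e n powr (- p)) powr (- 1 / p)"
      using pos[of n] p by (simp add: powr_powr)
    also have "\<dots> \<le> (D * real n) powr (- 1 / p)"
      using le D n p by (intro powr_mono2') auto
    also have "\<dots> = D powr (- 1 / p) * real n powr (- 1 / p)" by (rule powr_mult)
    finally show ?thesis .
  qed
  then have "\<forall>\<^sub>F n in sequentially. e n \<le> D powr (- 1 / p) * real n powr (- 1 / p)"
    unfolding eventually_sequentially by blast
  moreover have "D powr (- 1 / p) > 0" using D by simp
  ultimately show ?thesis unfolding p_def by blast
qed

lemma norm_diff_le_telescope:
  fixes x :: "nat \<Rightarrow> 'a::real_normed_vector" and V :: "nat \<Rightarrow> real"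
  assumes "m \<le> n"
    and steps: "\<And>j. m \<le> j \<Longrightarrow> j < n \<Longrightarrow> norm (x (Suc j) - x j) \<le> K * (V j - V (Suc j))"
  shows "norm (x n - x m) \<le> K * (V m - V n)"
  using assms
proof (induction n rule: dec_induct)
  case base
  then show ?case by simp
next
  case (step n)
  have "norm (x (Suc n) - x m) \<le> norm (x n - x m) + norm (x (Suc n) - x n)"
    using norm_triangle_ineq[of "x n - x m" "x (Suc n) - x n"] by simp
  also have "\<dots> \<le> K * (V m - V n) + K * (V n - V (Suc n))"
    using step by (intro add_mono) auto
  finally show ?case by (simp add: algebra_simps)
qed

lemma enumerate_Suc_eq_of_stationary:
  assumes S: "infinite S"
    and stationary: "\<And>k. enumerate S n < k \<Longrightarrow> k \<notin> S \<Longrightarrow> x (Suc k) = x k"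
  shows "x (enumerate S (Suc n)) = x (Suc (enumerate S n))"
proof -
  define a where "a = enumerate S n"
  define b where "b = enumerate S (Suc n)"
  have ab: "a < b" unfolding a_def b_def using enumerate_step[OF S] .
  have b_least: "b = (LEAST s. s \<in> S \<and> a < s)"
    unfolding a_def b_def using enumerate_Suc''[OF S] .
  have gap: "k \<notin> S" if "a < k" "k < b" for k
  proof
    assume "k \<in> S"
    then have "b \<le> k" unfolding b_least using that(1) by (intro Least_le) simp
    then show False using that(2) by simp
  qed
  have "x (Suc a + i) = x (Suc a)" if "Suc a + i \<le> b" for i
    using that
  proof (induction i)
    case 0
    then show ?case by simp
  next
    case (Suc i)
    have "x (Suc (Suc a + i)) = x (Suc a + i)"
      using stationary[of "Suc a + i"] gap[of "Suc a + i"] Suc.prems unfolding a_def by simp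
    then show ?case using Suc by simp
  qed
  from this[of "b - Suc a"] ab show ?thesis unfolding a_def[symmetric] b_def[symmetric] by simp
qed

section \<open>The Armijo condition for Lipschitz gradients\<close>

lemma lipschitz_grad_segment_bound:
  fixes f :: "'a::euclidean_space \<Rightarrow> real"
  assumes C1: "C1_grad f grad" and lip: "L-lipschitz_on S grad"
    and seg: "closed_segment x (x + s *\<^sub>R d) \<subseteq> S" and s: "0 \<le> s"
  shows "f (x + s *\<^sub>R d) \<le> f x + s * (grad x \<bullet> d) + L * s\<^sup>2 * (norm d)\<^sup>2"
proof -
  define phi where "phi u = f (x + u *\<^sub>R d)" for u
  have "(phi has_derivative (\<lambda>h. grad (x + u *\<^sub>R d) \<bullet> (h *\<^sub>R d))) (at u within {0..s})" for u
  proof -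
    have "((\<lambda>u. x + u *\<^sub>R d) has_derivative (\<lambda>h. h *\<^sub>R d)) (at u within {0..s})"
      by (auto intro!: derivative_eq_intros)
    moreover have "(f has_derivative (\<lambda>h. grad (x + u *\<^sub>R d) \<bullet> h)) (at (x + u *\<^sub>R d))"
      using C1 unfolding C1_grad_def by blast
    ultimately show ?thesis unfolding phi_def by (rule has_derivative_compose)
  qed
  then obtain u where u: "u \<in> {0..s}"
    and mvt: "phi s - phi 0 = grad (x + u *\<^sub>R d) \<bullet> (s *\<^sub>R d)"
    using mvt_very_simple[OF s, of phi] by fastforce
  define xi where "xi = x + u *\<^sub>R d"
  have "xi \<in> closed_segment x (x + s *\<^sub>R d)"
  proof (cases "s = 0")
    case False
    then have "xi = (1 - u / s) *\<^sub>R x + (u / s) *\<^sub>R (x + s *\<^sub>R d)"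
      unfolding xi_def by (simp add: scaleR_add_right scaleR_diff_left)
    then show ?thesis
      using u s False unfolding closed_segment_def by (auto intro!: exI[of _ "u / s"])
  qed (use u in \<open>simp add: xi_def\<close>)
  then have "xi \<in> S" "x \<in> S" using seg by auto
  then have "norm (grad xi - grad x) \<le> L * norm (xi - x)"
    using lipschitz_onD[OF lip] by (simp add: dist_norm)
  also have "\<dots> \<le> L * (s * norm d)"
    using u lipschitz_on_nonneg[OF lip] unfolding xi_def by (intro mult_left_mono) (auto intro: mult_right_mono)
  finally have lip_xi: "norm (grad xi - grad x) \<le> L * (s * norm d)" .
  have "(grad xi - grad x) \<bullet> d \<le> norm (grad xi - grad x) * norm d"
    by (rule Cauchy_Schwarz_ineq2[THEN abs_le_D1])
  also have "\<dots> \<le> L * (s * norm d) * norm d" using lip_xi by (rule mult_right_mono) simp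
  finally have "s * ((grad xi - grad x) \<bullet> d) \<le> s * (L * s * (norm d)\<^sup>2)"
    using s by (intro mult_left_mono) (auto simp: power2_eq_square mult.assoc)
  moreover have "phi s - phi 0 = s * (grad x \<bullet> d) + s * ((grad xi - grad x) \<bullet> d)"
    using mvt unfolding xi_def by (simp add: inner_diff_left algebra_simps)
  ultimately show ?thesis unfolding phi_def by (simp add: power2_eq_square algebra_simps)
qed

lemma armijo_if_stepsize_le:
  fixes f :: "'a::euclidean_space \<Rightarrow> real"
  assumes C1: "C1_grad f grad" and lip: "L-lipschitz_on S grad" and L: "L > 0"
    and seg: "closed_segment x (x + s *\<^sub>R d) \<subseteq> S" and s: "0 \<le> s" "s \<le> (1 - beta) / L"
    and descent: "grad x \<bullet> d \<le> - (norm d)\<^sup>2"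
  shows "armijo f beta x d s"
proof -
  have "L * s \<le> 1 - beta" using s L by (simp add: field_simps)
  then have "L * s * (s * (norm d)\<^sup>2) \<le> (1 - beta) * (s * (norm d)\<^sup>2)"
    by (rule mult_right_mono) (use s in simp)
  then have "L * s\<^sup>2 * (norm d)\<^sup>2 \<le> (1 - beta) * s * (norm d)\<^sup>2"
    by (simp add: power2_eq_square mult_ac)
  moreover have "s * (grad x \<bullet> d) \<le> - (s * (norm d)\<^sup>2)"
    using mult_left_mono[OF descent s(1)] by simp
  ultimately show ?thesis
    using lipschitz_grad_segment_bound[OF C1 lip seg s(1)] unfolding armijo_def
    by (simp add: algebra_simps)
qed

section \<open>Algorithm IRG with backtracking\<close>

locale irg_backtracking =
  fixes f :: "'a::euclidean_space \<Rightarrow> real" and grad :: "'a \<Rightarrow> 'a"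
    and x1 :: 'a and eps1 r1 mu theta beta gamma tau :: real and rho :: "nat \<Rightarrow> real"
    and x g d :: "nat \<Rightarrow> 'a" and eps r t :: "nat \<Rightarrow> real"
  assumes C1: "C1_grad f grad"
    and eps1: "eps1 > 0" and r1: "r1 > 0"
    and mu: "0 < mu" and theta: "0 < theta" and theta_mu: "theta < mu"
    and beta: "0 < beta" "beta < 1" and gamma: "0 < gamma"
    and tau: "0 < tau"
    and alg: "IRG_backtracking f grad x1 eps1 r1 mu theta rho beta gamma tau x g eps r d t"
begin

lemma
  assumes "k \<ge> 1"
  shows grad_error: "norm (g k - grad (x k)) \<le> eps k"
    and null_step:
      "norm (g k) \<le> r k + eps k \<Longrightarrow> r (k+1) = mu * r k \<and> eps (k+1) = theta * eps k \<and> d k = 0"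
    and serious_step:
      "\<not> norm (g k) \<le> r k + eps k \<Longrightarrow> r (k+1) = r k \<and> eps (k+1) = eps k \<and>
         d k = - ((norm (g k) - eps k) / norm (g k)) *\<^sub>R g k"
    and stepsize_null: "d k = 0 \<Longrightarrow> t k = tau"
    and stepsize_backtracking:
      "d k \<noteq> 0 \<Longrightarrow> \<exists>i. t k = gamma ^ i \<and> armijo f beta (x k) (d k) (gamma ^ i) \<and>
         (\<forall>j<i. \<not> armijo f beta (x k) (d k) (gamma ^ j))"
    and iterate_update: "x (k+1) = x k + t k *\<^sub>R d k"
  using alg assms unfolding IRG_backtracking_def by (auto split: if_splits)

text \<open>Since \<open>theta < mu\<close>, the ratio \<open>eps k / r k\<close> never exceeds its initial value.\<close>
lemma radii_pos_ratio: "k \<ge> 1 \<Longrightarrow> eps k > 0 \<and> r k > 0 \<and> eps k * r1 \<le> r k * eps1"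
proof (induction k rule: nat_induct_at_least)
  case base
  then show ?case using alg eps1 r1 unfolding IRG_backtracking_def by (simp add: mult.commute)
next
  case (Suc k)
  show ?case
  proof (cases "norm (g k) \<le> r k + eps k")
    case True
    then have upd: "r (k+1) = mu * r k" "eps (k+1) = theta * eps k"
      using null_step[OF Suc.hyps] by auto
    have "theta * eps k * r1 \<le> mu * eps k * r1"
      using Suc.IH theta_mu r1 by (intro mult_right_mono) auto
    also have "\<dots> \<le> mu * (r k * eps1)" using Suc.IH mu by (simp add: mult.assoc)
    finally show ?thesis using upd Suc.IH mu theta by (simp add: mult.assoc)
  next
    case False
    then show ?thesis using serious_step[OF Suc.hyps] Suc.IH by auto
  qed
qed

lemma stepsize_pos: "k \<ge> 1 \<Longrightarrow> t k > 0"
  using stepsize_null[of k] stepsize_backtracking[of k] tau gamma by (cases "d k = 0") auto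

lemma moved_iff_direction_nonzero: "k \<ge> 1 \<Longrightarrow> x (k+1) \<noteq> x k \<longleftrightarrow> d k \<noteq> 0"
  using iterate_update[of k] stepsize_pos[of k] by auto

lemma
  assumes "k \<ge> 1" "d k \<noteq> 0"
  shows direction_nonzero_grad_large: "norm (g k) > r k + eps k"
    and direction_nonzero_eq: "d k = - ((norm (g k) - eps k) / norm (g k)) *\<^sub>R g k"
    and norm_direction_nonzero: "norm (d k) = norm (g k) - eps k"
proof -
  show large: "norm (g k) > r k + eps k"
    using null_step[OF assms(1)] assms(2) by fastforce
  then show dk: "d k = - ((norm (g k) - eps k) / norm (g k)) *\<^sub>R g k"
    using serious_step[OF assms(1)] by auto
  have "norm (g k) > eps k" "eps k > 0" using large radii_pos_ratio[OF assms(1)] by auto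
  then have "g k \<noteq> 0" by auto
  with \<open>norm (g k) > eps k\<close> show "norm (d k) = norm (g k) - eps k" by (simp add: dk)
qed

lemma grad_inner_direction_le: assumes "k \<ge> 1" shows "grad (x k) \<bullet> d k \<le> - (norm (d k))\<^sup>2"
proof (cases "d k = 0")
  case False
  define c where "c = (norm (g k) - eps k) / norm (g k)"
  have large: "norm (g k) > eps k" "eps k > 0"
    using direction_nonzero_grad_large[OF assms False] radii_pos_ratio[OF assms] by auto
  then have "norm (g k) > 0" by linarith
  then have c: "c > 0" unfolding c_def using large by (intro divide_pos_pos) auto
  have "(g k - grad (x k)) \<bullet> g k \<le> norm (g k - grad (x k)) * norm (g k)"
    by (rule Cauchy_Schwarz_ineq2[THEN abs_le_D1])
  also have "\<dots> \<le> eps k * norm (g k)" using grad_error[OF assms] by (simp add: mult_right_mono)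
  finally have "grad (x k) \<bullet> g k \<ge> (norm (g k))\<^sup>2 - eps k * norm (g k)"
    by (simp add: inner_diff_left power2_norm_eq_inner)
  then have "grad (x k) \<bullet> d k \<le> - c * ((norm (g k))\<^sup>2 - eps k * norm (g k))"
    using c direction_nonzero_eq[OF assms False] unfolding c_def[symmetric] by simp
  also have "\<dots> = - (c * (norm (g k) * (norm (g k) - eps k)))"
    by (simp add: power2_eq_square algebra_simps)
  also have "\<dots> = - (norm (g k) - eps k)\<^sup>2"
    using \<open>norm (g k) > 0\<close> unfolding c_def by (simp add: power2_eq_square)
  finally show ?thesis using norm_direction_nonzero[OF assms False] by simp
qed simp

definition grad_factor :: real where "grad_factor = 1 + 2 * eps1 / r1"

lemma grad_factor_pos: "grad_factor > 0"
  unfolding grad_factor_def using eps1 r1 by (simp add: add_pos_nonneg)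

lemma norm_grad_le_direction:
  assumes "k \<ge> 1" "d k \<noteq> 0"
  shows "norm (grad (x k)) \<le> grad_factor * norm (d k)"
proof -
  have radii: "eps k > 0" "eps k * r1 \<le> r k * eps1" using radii_pos_ratio[OF assms(1)] by auto
  have "norm (grad (x k)) \<le> norm (g k) + eps k"
    using norm_triangle_ineq4[of "g k" "g k - grad (x k)"] grad_error[OF assms(1)] by simp
  also have "\<dots> = norm (d k) + 2 * eps k" using norm_direction_nonzero[OF assms] by simp
  also have "\<dots> \<le> norm (d k) + 2 * (eps1 / r1 * norm (d k))"
  proof -
    have "eps k \<le> eps1 / r1 * r k" using radii r1 by (simp add: field_simps)
    also have "\<dots> \<le> eps1 / r1 * norm (d k)"
      using direction_nonzero_grad_large[OF assms] norm_direction_nonzero[OF assms] eps1 r1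
      by (intro mult_left_mono) auto
    finally show ?thesis by simp
  qed
  also have "\<dots> = grad_factor * norm (d k)" unfolding grad_factor_def by (simp add: algebra_simps)
  finally show ?thesis .
qed

lemma f_decrease: assumes "k \<ge> 1" shows "f (x (k+1)) \<le> f (x k) - beta * t k * (norm (d k))\<^sup>2"
proof (cases "d k = 0")
  case False
  then show ?thesis
    using stepsize_backtracking[OF assms] iterate_update[OF assms] unfolding armijo_def by auto
qed (use iterate_update[OF assms] in simp)

lemma f_decrease_strict: "k \<ge> 1 \<Longrightarrow> d k \<noteq> 0 \<Longrightarrow> f (x (k+1)) < f (x k)"
  using f_decrease[of k] stepsize_pos[of k] beta
  by (smt (verit) mult_pos_pos zero_less_norm_iff zero_less_power)

lemma f_antimono: assumes "1 \<le> k" "k \<le> m" shows "f (x m) \<le> f (x k)"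
  using assms(2)
proof (induction m rule: dec_induct)
  case (step m)
  have "f (x (Suc m)) \<le> f (x m)"
    using f_decrease[of m] stepsize_pos[of m] step assms beta
    by (smt (verit) Suc_eq_plus1 le_trans mult_nonneg_nonneg zero_le_power2)
  then show ?case using step by simp
qed simp

text \<open>Near a point where \<open>grad\<close> is \<open>L\<close>-Lipschitz, a backtracked step whose trial
  \<open>t k / gamma\<close> stays inside the ball would have been accepted unless
  \<open>t k / gamma > (1 - beta) / L\<close>.\<close>
lemma stepsize_lower_bound:
  assumes k: "k \<ge> 1" and dk: "d k \<noteq> 0" and L: "L > 0"
    and lip: "L-lipschitz_on (ball xb \<delta>) grad"
    and near: "norm (x k - xb) < \<delta> / 2" and short: "norm (x (k+1) - x k) < gamma * \<delta> / 2"
  shows "t k \<ge> min 1 (gamma * (1 - beta) / L)"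
proof -
  obtain i where i: "t k = gamma ^ i" "\<forall>j<i. \<not> armijo f beta (x k) (d k) (gamma ^ j)"
    using stepsize_backtracking[OF k dk] by auto
  show ?thesis
  proof (cases i)
    case (Suc j)
    define s where "s = gamma ^ j"
    have s: "s > 0" "t k = gamma * s" using i Suc gamma unfolding s_def by auto
    have "gamma * (s * norm (d k)) < gamma * (\<delta> / 2)"
      using short iterate_update[OF k] s gamma by (simp add: abs_of_pos)
    then have "s * norm (d k) < \<delta> / 2" using gamma by simp
    then have "norm (x k + s *\<^sub>R d k - xb) < \<delta>"
      using near norm_triangle_ineq[of "x k - xb" "s *\<^sub>R d k"] s by (simp add: algebra_simps)
    moreover have "norm (x k - xb) < \<delta>" using near norm_ge_zero[of "x k - xb"] by linarith
    ultimately have seg: "closed_segment (x k) (x k + s *\<^sub>R d k) \<subseteq> ball xb \<delta>"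
      by (intro closed_segment_subset convex_ball) (auto simp: dist_norm norm_minus_commute)
    have "\<not> armijo f beta (x k) (d k) s" using i Suc unfolding s_def by auto
    then have "\<not> s \<le> (1 - beta) / L"
      using armijo_if_stepsize_le[OF C1 lip L seg _ _ grad_inner_direction_le[OF k]] s(1) by auto
    then have "gamma * ((1 - beta) / L) \<le> gamma * s" using gamma by (intro mult_left_mono) auto
    then show ?thesis using s by simp
  qed (use i in simp)
qed

end

section \<open>Convergence under the KL property\<close>

locale irg_backtracking_kl = irg_backtracking +
  fixes xbar :: "'a::euclidean_space" and M q :: real
  assumes accumulation: "\<exists>s::nat \<Rightarrow> nat. strict_mono s \<and> (x \<circ> s) \<longlonglongrightarrow> xbar"
    and Mq: "M > 0" "0 < q" "q < 1"
    and KL: "KL_power f grad xbar M q"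
    and lipschitz: "\<exists>\<delta>>0. \<exists>L. L-lipschitz_on (ball xbar \<delta>) grad"
    and nonnull_infinite: "infinite {k::nat. k \<ge> 1 \<and> x (k+1) \<noteq> x k}"
begin

lemma accumulation_subseq:
  obtains s where "strict_mono s" "(\<lambda>n. x (s n)) \<longlonglongrightarrow> xbar" "(\<lambda>n. f (x (s n))) \<longlonglongrightarrow> f xbar"
proof -
  obtain s where s: "strict_mono s" "(\<lambda>n. x (s n)) \<longlonglongrightarrow> xbar"
    using accumulation by (auto simp: o_def)
  have "isCont f xbar" using C1 has_derivative_continuous unfolding C1_grad_def by blast
  then show ?thesis using that s isCont_tendsto_compose[OF _ s(2)] by blast
qed

lemma f_ge_limit: assumes "k \<ge> 1" shows "f (x k) \<ge> f xbar"
proof -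
  obtain s where s: "strict_mono s" "(\<lambda>n. f (x (s n))) \<longlonglongrightarrow> f xbar"
    using accumulation_subseq by blast
  have "\<forall>n\<ge>k. f (x (s n)) \<le> f (x k)"
    using f_antimono[OF assms] seq_suble[OF s(1)] le_trans by blast
  then show ?thesis using LIMSEQ_le_const2[OF s(2)] by blast
qed

lemma f_tendsto: "(\<lambda>k. f (x k)) \<longlonglongrightarrow> f xbar"
proof (rule LIMSEQ_I)
  fix e :: real assume "e > 0"
  obtain s where s: "strict_mono s" "(\<lambda>n. f (x (s n))) \<longlonglongrightarrow> f xbar"
    using accumulation_subseq by blast
  then obtain n where n: "n \<ge> 1" "f (x (s n)) - f xbar < e"
    using LIMSEQ_D[OF s(2) \<open>e > 0\<close>] by (metis abs_less_iff max.cobounded1 max.cobounded2 real_norm_def)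
  have sn: "s n \<ge> 1" using seq_suble[OF s(1), of n] n(1) by linarith
  have "norm (f (x k) - f xbar) < e" if "k \<ge> s n" for k
    using f_antimono[OF sn that] f_ge_limit[of k] sn that n(2) by simp
  then show "\<exists>no. \<forall>k\<ge>no. norm (f (x k) - f xbar) < e" by blast
qed

lemma f_gt_limit: assumes "k \<ge> 1" shows "f (x k) > f xbar"
proof -
  obtain m where m: "m \<ge> k" "x (m+1) \<noteq> x m"
    using nonnull_infinite unfolding infinite_nat_iff_unbounded_le by blast
  then have "m \<ge> 1" "d m \<noteq> 0" using assms moved_iff_direction_nonzero by auto
  then show ?thesis
    using f_decrease_strict f_antimono[OF assms m(1)] f_ge_limit[of "m+1"] by fastforce
qed

definition potential :: "nat \<Rightarrow> real" where "potential k = (f (x k) - f xbar) powr (1 - q)"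

definition length_factor :: real where "length_factor = grad_factor / ((1 - q) * beta * M)"

lemma length_factor_pos: "length_factor > 0"
  unfolding length_factor_def using grad_factor_pos Mq beta by simp

lemma potential_nonneg: "potential k \<ge> 0" unfolding potential_def by simp

lemma potential_tendsto_0: "potential \<longlonglongrightarrow> 0"
proof -
  have "(\<lambda>k. f (x k) - f xbar) \<longlonglongrightarrow> 0" using f_tendsto by (simp add: LIM_zero)
  moreover have "\<forall>\<^sub>F k in sequentially. 0 \<le> f (x k) - f xbar"
    using f_ge_limit unfolding eventually_sequentially by (metis diff_ge_0_iff_ge)
  ultimately show ?thesis
    unfolding potential_def using Mq by (intro tendsto_zero_powrI[OF _ tendsto_const]) auto
qed

lemma step_length_le_potential_drop:
  assumes k: "k \<ge> 1" and KL_k: "M * (f (x k) - f xbar) powr q \<le> norm (grad (x k))"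
  shows "norm (x (k+1) - x k) \<le> length_factor * (potential k - potential (k+1))"
proof (cases "d k = 0")
  case True
  then show ?thesis using moved_iff_direction_nonzero[OF k] by (simp add: potential_def)
next
  case False
  define a where "a = f (x k) - f xbar"
  define b where "b = f (x (k+1)) - f xbar"
  have a: "a > 0" and b: "b > 0" unfolding a_def b_def using f_gt_limit k by auto
  have dec: "beta * t k * (norm (d k))\<^sup>2 \<le> a - b"
    unfolding a_def b_def using f_decrease[OF k] by simp
  then have "b \<le> a" using beta stepsize_pos[OF k] by (smt (verit) mult_nonneg_nonneg zero_le_power2)
  moreover have "potential k = a powr (1 - q)" "potential (k+1) = b powr (1 - q)"
    unfolding potential_def a_def b_def by simp_all
  ultimately have conc: "(1 - q) * (a - b) / a powr q \<le> potential k - potential (k+1)"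
    using powr_diff_ge_concave[OF b _ Mq(2,3)] by simp
  have "M * a powr q \<le> grad_factor * norm (d k)"
    using KL_k norm_grad_le_direction[OF k False] unfolding a_def by simp
  then have "t k * norm (d k) * (M * a powr q) \<le> t k * norm (d k) * (grad_factor * norm (d k))"
    using stepsize_pos[OF k] by (intro mult_left_mono) auto
  also have "\<dots> = grad_factor / beta * (beta * t k * (norm (d k))\<^sup>2)"
    using beta by (simp add: power2_eq_square)
  also have "\<dots> \<le> grad_factor / beta * (a - b)"
    using dec grad_factor_pos beta by (intro mult_left_mono) auto
  finally have "t k * norm (d k) \<le> grad_factor / beta * (a - b) / (M * a powr q)"
    using a Mq by (subst pos_le_divide_eq) auto
  also have "\<dots> = length_factor * ((1 - q) * (a - b) / a powr q)"
    unfolding length_factor_def using Mq beta a by (simp add: field_simps)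
  also have "\<dots> \<le> length_factor * (potential k - potential (k+1))"
    using conc length_factor_pos by (intro mult_left_mono) auto
  finally show ?thesis using iterate_update[OF k] stepsize_pos[OF k] by simp
qed

lemma norm_diff_le_potential_drop:
  assumes "1 \<le> m" "m \<le> n"
    and KL_between: "\<And>j. m \<le> j \<Longrightarrow> j < n \<Longrightarrow> M * (f (x j) - f xbar) powr q \<le> norm (grad (x j))"
  shows "norm (x n - x m) \<le> length_factor * (potential m - potential n)"
  using assms(2)
proof (rule norm_diff_le_telescope)
  fix j assume "m \<le> j" "j < n"
  then show "norm (x (Suc j) - x j) \<le> length_factor * (potential j - potential (Suc j))"
    using step_length_le_potential_drop[of j] KL_between assms(1) by simp
qed


lemma kl_on_ball_eventually:
  obtains R N where "R > 0"
    "\<And>m. m \<ge> N \<Longrightarrow> x m \<in> ball xbar R \<Longrightarrow> M * (f (x m) - f xbar) powr q \<le> norm (grad (x m))"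
    "\<And>m. m \<ge> N \<Longrightarrow> length_factor * potential m < R / 2"
proof -
  obtain eta U where eta: "eta > 0" "open U" "xbar \<in> U"
    and KL_U: "\<And>y. y \<in> U \<Longrightarrow> f xbar < f y \<Longrightarrow> f y < f xbar + eta \<Longrightarrow>
      M * (f y - f xbar) powr q \<le> norm (grad y)"
    using KL unfolding KL_power_def by blast
  obtain R where R: "R > 0" "ball xbar R \<subseteq> U" using eta open_contains_ball by blast
  have "\<forall>\<^sub>F k in sequentially. f (x k) < f xbar + eta"
    using eta f_tendsto by (intro order_tendstoD(2)) auto
  moreover have "\<forall>\<^sub>F k in sequentially. length_factor * potential k < R / 2"
    using R tendsto_mult_right_zero[OF potential_tendsto_0] by (intro order_tendstoD(2)) auto
  moreover have "\<forall>\<^sub>F k in sequentially. k \<ge> 1" by (rule eventually_ge_at_top)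
  ultimately have "\<forall>\<^sub>F k in sequentially.
      f (x k) < f xbar + eta \<and> length_factor * potential k < R / 2 \<and> k \<ge> 1"
    by eventually_elim blast
  then obtain N where N: "\<And>k. k \<ge> N \<Longrightarrow>
      f (x k) < f xbar + eta \<and> length_factor * potential k < R / 2 \<and> k \<ge> 1"
    unfolding eventually_sequentially by blast
  show ?thesis
  proof (rule that[OF R(1)])
    fix m assume "m \<ge> N" "x m \<in> ball xbar R"
    then show "M * (f (x m) - f xbar) powr q \<le> norm (grad (x m))"
      using KL_U[of "x m"] R N[of m] f_gt_limit[of m] by auto
  qed (use N in blast)
qed

lemma kl_eventually:
  obtains k0 where "k0 \<ge> 1" "\<And>m. m \<ge> k0 \<Longrightarrow> M * (f (x m) - f xbar) powr q \<le> norm (grad (x m))"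
proof -
  obtain R N where R: "R > 0"
    and KL_ball: "\<And>m. m \<ge> N \<Longrightarrow> x m \<in> ball xbar R \<Longrightarrow> M * (f (x m) - f xbar) powr q \<le> norm (grad (x m))"
    and small: "\<And>m. m \<ge> N \<Longrightarrow> length_factor * potential m < R / 2"
    using kl_on_ball_eventually by blast
  obtain s where s: "strict_mono s" "(\<lambda>n. x (s n)) \<longlonglongrightarrow> xbar" using accumulation_subseq by blast
  have "\<forall>\<^sub>F n in sequentially. dist (x (s n)) xbar < R / 2" using s(2) R by (intro tendstoD) auto
  then obtain n0 where n0: "\<And>n. n \<ge> n0 \<Longrightarrow> dist (x (s n)) xbar < R / 2"
    unfolding eventually_sequentially by blast
  define k0 where "k0 = s (max n0 (max N 1))"
  have k0: "k0 \<ge> 1" "k0 \<ge> N" "dist (x k0) xbar < R / 2"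
    using seq_suble[OF s(1), of "max n0 (max N 1)"] n0[of "max n0 (max N 1)"] unfolding k0_def by auto
  txt \<open>The path length after \<open>k0\<close> is below \<open>length_factor * potential k0 < R / 2\<close>,
    so the iterates never leave the ball.\<close>
  have in_ball: "x (k0 + m) \<in> ball xbar R" for m
  proof (induction m rule: less_induct)
    case (less m)
    have "x j \<in> ball xbar R" if "k0 \<le> j" "j < k0 + m" for j
      using less[of "j - k0"] that by simp
    then have "norm (x (k0 + m) - x k0) \<le> length_factor * (potential k0 - potential (k0 + m))"
      using KL_ball k0(1,2) by (intro norm_diff_le_potential_drop) auto
    also have "\<dots> \<le> length_factor * potential k0"
      using length_factor_pos potential_nonneg[of "k0 + m"] by (simp add: right_diff_distrib)
    also have "\<dots> < R / 2" using small k0 by simp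
    finally show ?case
      using k0(3) dist_triangle[of xbar "x (k0 + m)" "x k0"] by (simp add: dist_norm norm_minus_commute)
  qed
  show ?thesis
  proof (rule that[OF k0(1)])
    fix m assume "m \<ge> k0"
    then show "M * (f (x m) - f xbar) powr q \<le> norm (grad (x m))"
      using KL_ball[of m] in_ball[of "m - k0"] k0(2) by simp
  qed
qed

lemma dist_limit_le_potential:
  "\<forall>\<^sub>F m in sequentially. norm (x m - xbar) \<le> length_factor * potential m"
proof -
  obtain k0 where k0: "k0 \<ge> 1" "\<And>m. m \<ge> k0 \<Longrightarrow> M * (f (x m) - f xbar) powr q \<le> norm (grad (x m))"
    using kl_eventually by blast
  obtain s where s: "strict_mono s" "(\<lambda>n. x (s n)) \<longlonglongrightarrow> xbar" using accumulation_subseq by blast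
  have "norm (x m - xbar) \<le> length_factor * potential m" if "m \<ge> k0" for m
  proof -
    have bound: "norm (x (s n) - x m) \<le> length_factor * potential m" if "n \<ge> m" for n
    proof -
      have "m \<le> s n" using seq_suble[OF s(1), of n] that by linarith
      then have "norm (x (s n) - x m) \<le> length_factor * (potential m - potential (s n))"
        using k0 \<open>m \<ge> k0\<close> by (intro norm_diff_le_potential_drop) auto
      also have "\<dots> \<le> length_factor * potential m"
        using length_factor_pos potential_nonneg[of "s n"] by (simp add: right_diff_distrib)
      finally show ?thesis .
    qed
    have "(\<lambda>n. norm (x (s n) - x m)) \<longlonglongrightarrow> norm (xbar - x m)"
      using s(2) by (intro tendsto_norm tendsto_diff tendsto_const)
    then have "norm (xbar - x m) \<le> length_factor * potential m"
      by (rule LIMSEQ_le_const2) (use bound in blast)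
    then show ?thesis by (simp add: norm_minus_commute)
  qed
  then show ?thesis unfolding eventually_sequentially by blast
qed

lemma x_tendsto: "x \<longlonglongrightarrow> xbar"
proof -
  have "(\<lambda>m. length_factor * potential m) \<longlonglongrightarrow> 0"
    using tendsto_mult_right_zero[OF potential_tendsto_0] .
  with dist_limit_le_potential have "(\<lambda>m. x m - xbar) \<longlonglongrightarrow> 0"
    by (rule Lim_null_comparison)
  then show ?thesis by (simp add: LIM_zero_iff)
qed

lemma stepsize_eventually_ge:
  obtains tmin where "tmin > 0" "\<forall>\<^sub>F k in sequentially. d k \<noteq> 0 \<longrightarrow> t k \<ge> tmin"
proof -
  obtain \<delta> L0 where \<delta>: "\<delta> > 0" "L0-lipschitz_on (ball xbar \<delta>) grad" using lipschitz by blast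
  define L where "L = L0 + 1"
  have L: "L > 0" "L-lipschitz_on (ball xbar \<delta>) grad"
    using lipschitz_on_nonneg[OF \<delta>(2)] lipschitz_on_le[OF \<delta>(2)] unfolding L_def by auto
  have "(\<lambda>k. x (k+1) - x k) \<longlonglongrightarrow> xbar - xbar"
    using LIMSEQ_ignore_initial_segment[OF x_tendsto, of 1] x_tendsto by (rule tendsto_diff)
  then have "(\<lambda>k. norm (x (k+1) - x k)) \<longlonglongrightarrow> 0" using tendsto_norm_zero by simp
  then have "\<forall>\<^sub>F k in sequentially. norm (x (k+1) - x k) < gamma * \<delta> / 2"
    using gamma \<delta> by (intro order_tendstoD(2)) auto
  moreover have "\<forall>\<^sub>F k in sequentially. norm (x k - xbar) < \<delta> / 2"
    using \<delta> tendstoD[OF x_tendsto, of "\<delta> / 2"] by (simp add: dist_norm)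
  moreover have "\<forall>\<^sub>F k in sequentially. k \<ge> 1" by (rule eventually_ge_at_top)
  ultimately have ev: "\<forall>\<^sub>F k in sequentially. d k \<noteq> 0 \<longrightarrow> t k \<ge> min 1 (gamma * (1 - beta) / L)"
  proof eventually_elim
    case (elim k)
    then show ?case using stepsize_lower_bound[OF elim(3) _ L elim(2) elim(1)] by blast
  qed
  show ?thesis using gamma beta L by (intro that[OF _ ev]) simp
qed

lemma sufficient_decrease:
  obtains c where "c > 0" "\<forall>\<^sub>F k in sequentially. d k \<noteq> 0 \<longrightarrow>
    f (x (k+1)) - f xbar \<le> (f (x k) - f xbar) - c * (f (x k) - f xbar) powr (2 * q)"
proof -
  obtain k0 where k0: "k0 \<ge> 1" "\<And>m. m \<ge> k0 \<Longrightarrow> M * (f (x m) - f xbar) powr q \<le> norm (grad (x m))"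
    using kl_eventually by blast
  obtain tmin where tmin: "tmin > 0" "\<forall>\<^sub>F k in sequentially. d k \<noteq> 0 \<longrightarrow> t k \<ge> tmin"
    using stepsize_eventually_ge by blast
  define c where "c = beta * tmin * (M / grad_factor)\<^sup>2"
  have "\<forall>\<^sub>F k in sequentially. d k \<noteq> 0 \<longrightarrow>
    f (x (k+1)) - f xbar \<le> (f (x k) - f xbar) - c * (f (x k) - f xbar) powr (2 * q)"
    using tmin(2) eventually_ge_at_top[of k0]
  proof eventually_elim
    case (elim k)
    show ?case
    proof
      assume dk: "d k \<noteq> 0"
      define a where "a = f (x k) - f xbar"
      have k: "k \<ge> 1" "tmin \<le> t k" using k0(1) elim dk by auto
      have "M * a powr q \<le> norm (grad (x k))" using k0(2) elim(2) unfolding a_def by simp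
      also have "\<dots> \<le> grad_factor * norm (d k)" using norm_grad_le_direction[OF k(1) dk] .
      finally have "M * a powr q \<le> grad_factor * norm (d k)" .
      then have "M / grad_factor * a powr q \<le> norm (d k)"
        using grad_factor_pos by (simp add: pos_divide_le_eq mult.commute)
      then have "(M / grad_factor * a powr q)\<^sup>2 \<le> (norm (d k))\<^sup>2"
        using Mq grad_factor_pos by (intro power_mono) auto
      moreover have "(M / grad_factor * a powr q)\<^sup>2 = (M / grad_factor)\<^sup>2 * a powr (2 * q)"
        by (simp only: power_mult_distrib) (simp add: power2_eq_square flip: powr_add)
      ultimately have "(M / grad_factor)\<^sup>2 * a powr (2 * q) \<le> (norm (d k))\<^sup>2" by simp
      moreover have "beta * tmin \<le> beta * t k" using k beta by simp
      ultimately have "beta * tmin * ((M / grad_factor)\<^sup>2 * a powr (2 * q)) \<le> beta * t k * (norm (d k))\<^sup>2"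
        using k tmin(1) beta by (intro mult_mono) auto
      then show "f (x (k+1)) - f xbar \<le> a - c * a powr (2 * q)"
        using f_decrease[OF k(1)] unfolding a_def c_def by (simp add: mult.assoc)
    qed
  qed
  moreover have "c > 0" unfolding c_def using beta tmin Mq grad_factor_pos by simp
  ultimately show ?thesis using that by blast
qed


subsection \<open>Rates along the non-null iterations\<close>

abbreviation nonnull :: "nat set" where "nonnull \<equiv> {k. k \<ge> 1 \<and> x (k+1) \<noteq> x k}"

lemma enumerate_nonnull:
  "enumerate nonnull n \<ge> 1" "d (enumerate nonnull n) \<noteq> 0" "n \<le> enumerate nonnull n"
  using enumerate_in_set[OF nonnull_infinite, of n] moved_iff_direction_nonzero
    le_enumerate[OF nonnull_infinite, of n] by auto

lemma x_enumerate_nonnull_Suc: "x (enumerate nonnull (Suc n)) = x (enumerate nonnull n + 1)"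
proof -
  have "x (Suc k) = x k" if "enumerate nonnull n < k" "k \<notin> nonnull" for k
    using that enumerate_nonnull(1)[of n] by auto
  then show ?thesis using enumerate_Suc_eq_of_stationary[OF nonnull_infinite, of n x] by simp
qed

text \<open>\<open>gap k\<close> belongs to the paper's \<open>z^k\<close>, since \<open>enumerate\<close> counts from \<open>0\<close>
  (and \<open>gap 0 = gap 1\<close> by truncated subtraction).\<close>
definition gap :: "nat \<Rightarrow> real" where "gap k = f (x (enumerate nonnull (k - 1))) - f xbar"

lemma gap_pos: "gap k > 0"
  unfolding gap_def using f_gt_limit enumerate_nonnull(1) by simp

lemma gap_tendsto_0: "gap \<longlonglongrightarrow> 0"
proof -
  have "filterlim (\<lambda>k. enumerate nonnull (k - 1)) sequentially sequentially"
    using filterlim_subseq[OF strict_mono_enumerate[OF nonnull_infinite]]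
      filterlim_minus_const_nat_at_top by (rule filterlim_compose)
  then have "(\<lambda>k. f (x (enumerate nonnull (k - 1)))) \<longlonglongrightarrow> f xbar"
    using f_tendsto by (rule filterlim_compose[rotated])
  then show ?thesis unfolding gap_def by (simp add: LIM_zero)
qed

lemma gap_recursion:
  obtains c where "c > 0" "\<forall>\<^sub>F n in sequentially. gap (Suc n) \<le> gap n - c * gap n powr (2 * q)"
proof -
  obtain c where c: "c > 0" and "\<forall>\<^sub>F k in sequentially. d k \<noteq> 0 \<longrightarrow>
    f (x (k+1)) - f xbar \<le> (f (x k) - f xbar) - c * (f (x k) - f xbar) powr (2 * q)"
    using sufficient_decrease by blast
  then obtain N where dec: "\<And>k. k \<ge> N \<Longrightarrow> d k \<noteq> 0 \<longrightarrow>
    f (x (k+1)) - f xbar \<le> (f (x k) - f xbar) - c * (f (x k) - f xbar) powr (2 * q)"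
    unfolding eventually_sequentially by blast
  have "gap (Suc n) \<le> gap n - c * gap n powr (2 * q)" if "n \<ge> N + 1" for n
  proof -
    define k where "k = enumerate nonnull (n - 1)"
    have "k \<ge> N" using enumerate_nonnull(3)[of "n - 1"] that unfolding k_def by linarith
    moreover have "gap (Suc n) = f (x (k+1)) - f xbar"
      using x_enumerate_nonnull_Suc[of "n - 1"] that unfolding gap_def k_def by simp
    ultimately show ?thesis using dec[of k] enumerate_nonnull(2) unfolding gap_def k_def by simp
  qed
  then show ?thesis using that[OF c] unfolding eventually_sequentially by blast
qed

lemma dist_enumerate_nonnull_le_gap:
  "\<forall>\<^sub>F k in sequentially. norm (x (enumerate nonnull (k - 1)) - xbar) \<le> length_factor * gap k powr (1 - q)"
proof -
  obtain N where N: "\<And>m. m \<ge> N \<Longrightarrow> norm (x m - xbar) \<le> length_factor * potential m"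
    using dist_limit_le_potential unfolding eventually_sequentially by blast
  have "norm (x (enumerate nonnull (k - 1)) - xbar) \<le> length_factor * gap k powr (1 - q)"
    if "k \<ge> N + 1" for k
  proof -
    have "enumerate nonnull (k - 1) \<ge> N" using enumerate_nonnull(3)[of "k - 1"] that by linarith
    then show ?thesis using N unfolding potential_def gap_def by blast
  qed
  then show ?thesis unfolding eventually_sequentially by blast
qed

lemma nonnull_linear_rate:
  assumes "q \<le> 1/2"
  shows "\<exists>C>0. \<exists>lam. 0 < lam \<and> lam < 1 \<and>
    (\<forall>\<^sub>F k in sequentially. norm (x (enumerate nonnull (k - 1)) - xbar) \<le> C * lam ^ k)"
proof -
  obtain c where c: "c > 0" "\<forall>\<^sub>F n in sequentially. gap (Suc n) \<le> gap n - c * gap n powr (2 * q)"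
    using gap_recursion by blast
  obtain A lam where A: "A > 0" "0 < lam" "lam < 1" "\<forall>\<^sub>F k in sequentially. gap k \<le> A * lam ^ k"
    using decay_recursion_linear_rate[OF gap_pos gap_tendsto_0 Mq(2) assms c] by blast
  define C where "C = length_factor * A powr (1 - q)"
  have "\<forall>\<^sub>F k in sequentially. norm (x (enumerate nonnull (k - 1)) - xbar) \<le> C * (lam powr (1 - q)) ^ k"
    using dist_enumerate_nonnull_le_gap A(4)
  proof eventually_elim
    case (elim k)
    have "gap k powr (1 - q) \<le> (A * lam ^ k) powr (1 - q)"
      using elim(2) gap_pos[of k] Mq by (intro powr_mono2) auto
    also have "\<dots> = A powr (1 - q) * (lam powr (1 - q)) ^ k"
      using A(2) by (simp add: powr_mult powr_power flip: powr_realpow add: powr_powr mult.commute)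
    finally have "length_factor * gap k powr (1 - q) \<le> C * (lam powr (1 - q)) ^ k"
      using length_factor_pos unfolding C_def by (simp add: mult.assoc)
    then show ?case using elim(1) by linarith
  qed
  moreover have "0 < lam powr (1 - q)" "lam powr (1 - q) < 1"
    using A Mq powr_less_mono2[of "1 - q" lam 1] by auto
  moreover have "C > 0" unfolding C_def using length_factor_pos A by simp
  ultimately show ?thesis by blast
qed

lemma nonnull_sublinear_rate:
  assumes "1/2 < q"
  shows "\<exists>vr>0. \<forall>\<^sub>F k in sequentially.
    norm (x (enumerate nonnull (k - 1)) - xbar) \<le> vr * real k powr (- (1 - q) / (2 * q - 1))"
proof -
  obtain c where c: "c > 0" "\<forall>\<^sub>F n in sequentially. gap (Suc n) \<le> gap n - c * gap n powr (2 * q)"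
    using gap_recursion by blast
  obtain v where v: "v > 0" "\<forall>\<^sub>F k in sequentially. gap k \<le> v * real k powr (- 1 / (2 * q - 1))"
    using decay_recursion_sublinear_rate[OF gap_pos assms c] by blast
  define vr where "vr = length_factor * v powr (1 - q)"
  have "\<forall>\<^sub>F k in sequentially.
    norm (x (enumerate nonnull (k - 1)) - xbar) \<le> vr * real k powr (- (1 - q) / (2 * q - 1))"
    using dist_enumerate_nonnull_le_gap v(2)
  proof eventually_elim
    case (elim k)
    have "gap k powr (1 - q) \<le> (v * real k powr (- 1 / (2 * q - 1))) powr (1 - q)"
      using elim(2) gap_pos[of k] Mq by (intro powr_mono2) auto
    also have "\<dots> = v powr (1 - q) * real k powr (- 1 / (2 * q - 1) * (1 - q))"
      by (simp add: powr_mult powr_powr)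
    also have "- 1 / (2 * q - 1) * (1 - q) = - (1 - q) / (2 * q - 1)"
      by (simp add: field_split_simps)
    finally have "length_factor * gap k powr (1 - q) \<le> vr * real k powr (- (1 - q) / (2 * q - 1))"
      using length_factor_pos unfolding vr_def by (simp add: mult.assoc)
    then show ?case using elim(1) by linarith
  qed
  moreover have "vr > 0" unfolding vr_def using length_factor_pos v by simp
  ultimately show ?thesis by blast
qed

end

theorem mainTheorem16:
  fixes f :: "'a::euclidean_space \<Rightarrow> real" and grad :: "'a \<Rightarrow> 'a"
    and x1 :: 'a and eps1 r1 mu theta beta gamma tau :: real and rho :: "nat \<Rightarrow> real"
    and x g d :: "nat \<Rightarrow> 'a" and eps r t :: "nat \<Rightarrow> real"
    and xbar :: 'a and M q :: real
  assumes C1: "C1_grad f grad"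
    and eps1: "eps1 > 0" and r1: "r1 > 0"
    and mu: "0 < mu" "mu < 1" and theta: "0 < theta" "theta < 1"
    and theta_mu: "theta < mu"
    and rho_pos: "\<forall>k\<ge>1. rho k > 0"
    and rho_lim: "rho \<longlonglongrightarrow> 0"
    and beta: "0 < beta" "beta < 1" and gamma: "0 < gamma" "gamma < 1"
    and tau: "0 < tau" "tau < 1"
    and alg: "IRG_backtracking f grad x1 eps1 r1 mu theta rho beta gamma tau x g eps r d t"
    and acc: "\<exists>s::nat \<Rightarrow> nat. strict_mono s \<and> (x \<circ> s) \<longlonglongrightarrow> xbar"
    and Mq: "M > 0" "0 < q" "q < 1"
    and KL: "KL_power f grad xbar M q"
    and Lip: "\<exists>\<delta>>0. \<exists>L. L-lipschitz_on (ball xbar \<delta>) grad"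
    and inf: "infinite {k::nat. k \<ge> 1 \<and> x (k+1) \<noteq> x k}"
  shows
    "(q \<le> 1/2 \<longrightarrow>
       (\<exists>C>0. \<exists>lam. 0 < lam \<and> lam < 1 \<and>
          (\<forall>\<^sub>F k in sequentially.
             norm (x (enumerate {k::nat. k \<ge> 1 \<and> x (k+1) \<noteq> x k} (k - 1)) - xbar) \<le> C * lam ^ k))) \<and>
     (1/2 < q \<longrightarrow>
       (\<exists>vr>0. \<forall>\<^sub>F k in sequentially.
          norm (x (enumerate {k::nat. k \<ge> 1 \<and> x (k+1) \<noteq> x k} (k - 1)) - xbar)
            \<le> vr * real k powr (- (1 - q) / (2 * q - 1))))"
proof -
  interpret irg_backtracking_kl f grad x1 eps1 r1 mu theta beta gamma tau rho x g d eps r t xbar M q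
    using C1 eps1 r1 mu theta theta_mu beta gamma tau alg acc Mq KL Lip inf by unfold_locales auto
  show ?thesis using nonnull_linear_rate nonnull_sublinear_rate by blast
qed

end
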